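(* With $T$ and $\tilde S$ as in the context, $p_T/2\le p_{\tilde S}\le p_T$.
   Context: Barycentric subdivisions: $T_0$ is an equilateral triangle with vertices $v_0,v_1,v_2$. $T_n$ is obtained by subdividing every triangular face $\{x,y,z\}$ of $T_{n-1}$ into the six triangles $\{x,m_{xy},c\},\{m_{xy},y,c\},\{y,m_{yz},c\},\{m_{yz},z,c\},\{z,m_{zx},c\},\{m_{zx},x,c\}$, where $m_{uv}$ are side midpoints and $c$ is the barycenter. As a simple graph, $T_n$ has the vertices of this triangulation and the sides of its $6^n$ faces as edges. $\tilde S_n$ is the multigraph on the vertex set of $T_n$ containing, for each face of $T_n$, its own copy of each of the face's three sides. Sides shared by two faces, i.e. edges not on the boundary of $T_0$, are therefore doubled, and boundary edges are single. This is the graph obtained from the $n$-th approximation of the non-p.c.f. Sierpinski gasket by identifying midpoints of parallel edges. $T$ and $\tilde S$ denote the limits. Bond percolation with parameter $p$: each edge receives an i.i.d. uniform $[0,1]$ label $\omega(e)$ and is open if $\omega(e)<p$. For $G\in\{T,\tilde S\}$ with approximations $G_n$, $p_G=\sup\{p\in[0,1]:\mathbb{P}_p(\text{there is an open path from } v_0 \text{ to } v_1 \text{ in } G_n)\to0 \text{ as } n\to\infty\}$. *)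

theory Defs
  imports "HOL-Probability.Probability"
begin

definition bv0 :: complex where "bv0 = 0"
definition bv1 :: complex where "bv1 = 1"
definition bv2 :: complex where "bv2 = Complex (1/2) (sqrt 3 / 2)"

type_synonym face = "complex \<times> complex \<times> complex"

definition mid :: "complex \<Rightarrow> complex \<Rightarrow> complex" where
  "mid x y = (x + y) / 2"

definition subdivide :: "face \<Rightarrow> face set" where
  "subdivide f = (case f of (x, y, z) \<Rightarrow>
     (let c = (x + y + z) / 3 in
      {(x, mid x y, c), (mid x y, y, c), (y, mid y z, c), (mid y z, z, c),
       (z, mid z x, c), (mid z x, x, c)}))"

primrec bary_faces :: "nat \<Rightarrow> face set" where
  "bary_faces 0 = {(bv0, bv1, bv2)}"
| "bary_faces (Suc n) = \<Union> (subdivide ` bary_faces n)"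

definition side :: "face \<Rightarrow> nat \<Rightarrow> complex set" where
  "side f i = (case f of (x, y, z) \<Rightarrow>
     (if i = 0 then {x, y} else if i = 1 then {y, z} else {z, x}))"

text \<open>Simple graph T_n: edges are the sides of the faces (as unordered pairs);
  each edge's endpoint set is the edge itself.\<close>
definition T_edges :: "nat \<Rightarrow> complex set set" where
  "T_edges n = {side f i | f i. f \<in> bary_faces n \<and> i < 3}"

text \<open>Multigraph S~_n: one copy of each side per face; an edge is (face, side index).\<close>
definition S_edges :: "nat \<Rightarrow> (face \<times> nat) set" where
  "S_edges n = bary_faces n \<times> {0, 1, 2}"

definition S_ends :: "face \<times> nat \<Rightarrow> complex set" where
  "S_ends e = side (fst e) (snd e)"

definition open_connected ::
  "'e set \<Rightarrow> ('e \<Rightarrow> complex set) \<Rightarrow> ('e \<Rightarrow> bool) \<Rightarrow> complex \<Rightarrow> complex \<Rightarrow> bool" where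
  "open_connected E ends \<omega> u v \<longleftrightarrow>
     (u, v) \<in> {(x, y). \<exists>e\<in>E. \<omega> e \<and> ends e = {x, y}}\<^sup>*"

text \<open>Bond percolation with parameter p: edges independently open with probability p
  (equivalently, uniform labels below p).\<close>
definition perc_prob ::
  "'e set \<Rightarrow> ('e \<Rightarrow> complex set) \<Rightarrow> real \<Rightarrow> complex \<Rightarrow> complex \<Rightarrow> real" where
  "perc_prob E ends p u v =
     measure_pmf.prob (Pi_pmf E False (\<lambda>_. bernoulli_pmf p))
       {\<omega>. open_connected E ends \<omega> u v}"

definition crit_prob :: "(nat \<Rightarrow> 'e set) \<Rightarrow> ('e \<Rightarrow> complex set) \<Rightarrow> real" where
  "crit_prob G ends =
     Sup {p \<in> {0..1}. (\<lambda>n. perc_prob (G n) ends p bv0 bv1) \<longlonglongrightarrow> 0}"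

definition p_T :: real where "p_T = crit_prob T_edges id"
definition p_S :: real where "p_S = crit_prob S_edges S_ends"

end

theory Submission
  imports Defs
begin

text \<open>Every side of T_n is a side of some face, so T_n embeds into S~_n and percolates less:
  hence p_S \<le> p_T. Conversely, the faces of T_n have pairwise disjoint interiors, so no side
  belongs to more than two faces and S~_n embeds into T_n with every edge doubled. A doubled edge
  with parameter p is open with probability 1 - (1 - p)^2 \<le> 2 p, so T being subcritical at 2 p
  makes S~ subcritical at p, i.e. p_T / 2 \<le> p_S.\<close>

section \<open>Bond percolation on finite multigraphs\<close>

lemma open_connected_mono:
  assumes "\<And>e. e \<in> E \<Longrightarrow> \<omega> e \<Longrightarrow> \<exists>e'\<in>E'. \<omega>' e' \<and> ends' e' = ends e"
    and "open_connected E ends \<omega> u v"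
  shows "open_connected E' ends' \<omega>' u v"
proof -
  have "{(x, y). \<exists>e\<in>E. \<omega> e \<and> ends e = {x, y}} \<subseteq> {(x, y). \<exists>e\<in>E'. \<omega>' e \<and> ends' e = {x, y}}"
    using assms(1) by fastforce
  then show ?thesis
    using assms(2) rtrancl_mono unfolding open_connected_def by blast
qed

lemma perc_prob_nonneg: "0 \<le> perc_prob E ends p u v"
  by (simp add: perc_prob_def)

lemma perc_prob_zero:
  assumes "finite E" "u \<noteq> v"
  shows "perc_prob E ends 0 u v = 0"
proof -
  have "bernoulli_pmf 0 = return_pmf False"
    by (rule pmf_eqI) (simp split: split_indicator)
  then have "Pi_pmf E False (\<lambda>_. bernoulli_pmf 0) = return_pmf (\<lambda>_. False)"
    using assms(1) by simp
  moreover have "\<not> open_connected E ends (\<lambda>_. False) u v"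
    using assms(2) by (simp add: open_connected_def)
  ultimately show ?thesis
    by (simp add: perc_prob_def measure_return)
qed

lemma measure_bind_pmf_le:
  assumes "\<And>x y. x \<in> set_pmf M \<Longrightarrow> y \<in> set_pmf (N x) \<Longrightarrow> y \<in> X \<Longrightarrow> x \<in> B"
  shows "measure_pmf.prob (bind_pmf M N) X \<le> measure_pmf.prob M B"
proof -
  have "emeasure (bind_pmf M N) X = (\<integral>\<^sup>+x. emeasure (N x) X \<partial>M)"
    by simp
  also have "\<dots> \<le> (\<integral>\<^sup>+x. indicator B x \<partial>M)"
  proof (intro nn_integral_mono_AE AE_pmfI)
    fix x assume x: "x \<in> set_pmf M"
    show "emeasure (N x) X \<le> indicator B x"
    proof (cases "x \<in> B")
      case False
      then have "X \<inter> set_pmf (N x) = {}"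
        using assms x by blast
      then have "emeasure (N x) X = 0"
        by (simp add: measure_pmf.emeasure_eq_measure measure_pmf_zero_iff Int_commute)
      then show ?thesis
        by simp
    qed (simp add: measure_pmf.emeasure_le_1)
  qed
  also have "\<dots> = emeasure M B"
    by simp
  finally show ?thesis
    by (simp add: measure_pmf.emeasure_eq_measure)
qed

lemma bernoulli_pmf_thinning:
  assumes "0 \<le> p" "p \<le> q" "q \<le> 1" "0 < q"
  shows "bernoulli_pmf p =
    bind_pmf (bernoulli_pmf q) (\<lambda>a. if a then bernoulli_pmf (p / q) else return_pmf False)"
proof (rule pmf_eqI)
  fix b :: bool
  have "0 \<le> p / q" "p / q \<le> 1"
    using assms by auto
  then show "pmf (bernoulli_pmf p) b =
      pmf (bind_pmf (bernoulli_pmf q) (\<lambda>a. if a then bernoulli_pmf (p / q) else return_pmf False)) b"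
    using assms by (cases b) (auto simp: pmf_bind field_simps)
qed

lemma perc_prob_mono:
  assumes fin: "finite E" and "0 \<le> p" "p \<le> q" "q \<le> 1"
  shows "perc_prob E ends p u v \<le> perc_prob E ends q u v"
proof (cases "q = 0")
  case False
  let ?thin = "\<lambda>\<omega> e. if \<omega> e then bernoulli_pmf (p / q) else return_pmf False"
  have "Pi_pmf E False (\<lambda>_. bernoulli_pmf p) =
      Pi_pmf E False (\<lambda>e. bind_pmf (bernoulli_pmf q) (\<lambda>a. if a then bernoulli_pmf (p / q) else return_pmf False))"
    using bernoulli_pmf_thinning[of p q] False assms by simp
  also have "\<dots> = bind_pmf (Pi_pmf E False (\<lambda>_. bernoulli_pmf q)) (\<lambda>\<omega>. Pi_pmf E False (?thin \<omega>))"
    by (rule Pi_pmf_bind[OF fin])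
  finally have coupling: "Pi_pmf E False (\<lambda>_. bernoulli_pmf p) = \<dots>" .
  show ?thesis
    unfolding perc_prob_def coupling
  proof (rule measure_bind_pmf_le)
    fix \<omega> \<omega>'
    assume "\<omega>' \<in> set_pmf (Pi_pmf E False (?thin \<omega>))"
      and "\<omega>' \<in> {\<omega>. open_connected E ends \<omega> u v}"
    moreover have "\<omega> e" if "\<omega>' \<in> set_pmf (Pi_pmf E False (?thin \<omega>))" "\<omega>' e" for e
    proof -
      have "\<omega>' \<in> PiE_dflt E False (set_pmf \<circ> ?thin \<omega>)"
        using that(1) set_Pi_pmf_subset'[OF fin, of False "?thin \<omega>"] by blast
      then show ?thesis
        using that(2) by (cases "e \<in> E"; cases "\<omega> e") (auto simp: PiE_dflt_def)
    qed
    ultimately show "\<omega> \<in> {\<omega>. open_connected E ends \<omega> u v}"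
      using open_connected_mono[of E \<omega>' E \<omega> ends ends u v] by blast
  qed
qed (use assms in simp)

lemma perc_prob_le_embedding:
  fixes g :: "'e \<Rightarrow> 'f"
  assumes fin: "finite E'" and inf: "infinite (UNIV :: 'f set)"
    and inj: "inj_on g E" and sub: "g ` E \<subseteq> E'"
    and ends: "\<And>e. e \<in> E \<Longrightarrow> ends' (g e) = ends e"
  shows "perc_prob E ends p u v \<le> perc_prob E' ends' p u v"
proof -
  \<comment> \<open>Pi_pmf_bij_betw needs a bijection that maps everything outside E outside g ` E;
    a fresh edge d provides one, and this is why the edge type must be infinite.\<close>
  obtain d where d: "d \<notin> E'"
    using ex_new_if_finite[OF inf fin] by blast
  define g' where "g' e = (if e \<in> E then g e else d)" for e
  define restrict where "restrict \<omega> e' = (if e' \<in> g ` E then \<omega> e' else False)"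
    for \<omega> :: "'f \<Rightarrow> bool" and e'
  have finE: "finite E"
    using finite_imageD[OF finite_subset[OF sub fin] inj] .
  have bij: "bij_betw g' E (g ` E)"
    using inj unfolding g'_def bij_betw_def inj_on_def by auto
  have out: "e \<notin> E \<Longrightarrow> g' e \<notin> g ` E" for e
    using sub d unfolding g'_def by auto
  let ?B = "\<lambda>_. bernoulli_pmf p"
  have "Pi_pmf E False ?B = map_pmf (\<lambda>\<omega>. \<omega> \<circ> g') (Pi_pmf (g ` E) False ?B)"
    by (rule Pi_pmf_bij_betw[OF finE bij out])
  also have "Pi_pmf (g ` E) False ?B = map_pmf restrict (Pi_pmf E' False ?B)"
    unfolding restrict_def by (rule Pi_pmf_subset[OF fin sub])
  finally have eq: "Pi_pmf E False ?B = map_pmf (\<lambda>\<omega>. restrict \<omega> \<circ> g') (Pi_pmf E' False ?B)"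
    by (simp add: map_pmf_comp comp_def)
  have "open_connected E' ends' \<omega> u v" if "open_connected E ends (restrict \<omega> \<circ> g') u v" for \<omega>
    using that sub ends
    by (intro open_connected_mono[OF _ that]) (auto simp: restrict_def g'_def)
  then show ?thesis
    unfolding perc_prob_def eq measure_map_pmf
    by (intro measure_pmf.finite_measure_mono) auto
qed

lemma bernoulli_pmf_or:
  assumes "0 \<le> p" "p \<le> 1"
  shows "bernoulli_pmf (2 * p - p\<^sup>2) =
    bind_pmf (bernoulli_pmf p) (\<lambda>a. bind_pmf (bernoulli_pmf p) (\<lambda>b. return_pmf (a \<or> b)))"
proof (rule pmf_eqI)
  fix c :: bool
  have "p * p \<le> p" "0 \<le> (1 - p) * (1 - p)"
    using assms by (auto intro: mult_left_le_one_le)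
  then have "0 \<le> 2 * p - p\<^sup>2" "2 * p - p\<^sup>2 \<le> 1"
    using assms by (simp_all add: power2_eq_square algebra_simps)
  then show "pmf (bernoulli_pmf (2 * p - p\<^sup>2)) c =
      pmf (bind_pmf (bernoulli_pmf p) (\<lambda>a. bind_pmf (bernoulli_pmf p) (\<lambda>b. return_pmf (a \<or> b)))) c"
    using assms by (cases c) (auto simp: pmf_bind power2_eq_square algebra_simps)
qed

lemma Pi_pmf_bernoulli_or:
  assumes fin: "finite E" and "0 \<le> p" "p \<le> 1"
  shows "map_pmf (\<lambda>(\<omega>, \<omega>') e. e \<in> E \<and> (\<omega> e \<or> \<omega>' e))
           (pair_pmf (Pi_pmf E False (\<lambda>_. bernoulli_pmf p)) (Pi_pmf E False (\<lambda>_. bernoulli_pmf p)))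
         = Pi_pmf E False (\<lambda>_. bernoulli_pmf (2 * p - p\<^sup>2))"
proof -
  let ?B = "bernoulli_pmf p"
  let ?P = "Pi_pmf E False (\<lambda>_. ?B)"
  have "Pi_pmf E False (\<lambda>_. bernoulli_pmf (2 * p - p\<^sup>2)) =
        Pi_pmf E False (\<lambda>_. bind_pmf ?B (\<lambda>a. bind_pmf ?B (\<lambda>b. return_pmf (a \<or> b))))"
    using bernoulli_pmf_or[OF assms(2,3)] by simp
  also have "\<dots> = bind_pmf ?P (\<lambda>\<omega>. Pi_pmf E False (\<lambda>e. bind_pmf ?B (\<lambda>b. return_pmf (\<omega> e \<or> b))))"
    by (rule Pi_pmf_bind[OF fin])
  also have "\<dots> = bind_pmf ?P (\<lambda>\<omega>. bind_pmf ?P (\<lambda>\<omega>'. Pi_pmf E False (\<lambda>e. return_pmf (\<omega> e \<or> \<omega>' e))))"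
    by (intro bind_pmf_cong refl Pi_pmf_bind[OF fin])
  also have "\<dots> = bind_pmf ?P (\<lambda>\<omega>. bind_pmf ?P (\<lambda>\<omega>'. return_pmf (\<lambda>e. e \<in> E \<and> (\<omega> e \<or> \<omega>' e))))"
    using fin by (intro bind_pmf_cong refl) (simp add: fun_eq_iff)
  also have "\<dots> = map_pmf (\<lambda>(\<omega>, \<omega>') e. e \<in> E \<and> (\<omega> e \<or> \<omega>' e)) (pair_pmf ?P ?P)"
    by (simp add: pair_pmf_def map_pmf_def bind_assoc_pmf bind_return_pmf)
  finally show ?thesis
    by simp
qed

text \<open>2 p - p^2 = 1 - (1 - p)^2 is the probability that at least one of two independent copies
  of an edge is open.\<close>
lemma perc_prob_doubled_le:
  assumes fin: "finite E" and p: "0 \<le> p" "p \<le> 1"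
  shows "perc_prob (E \<times> (UNIV :: bool set)) (\<lambda>e. ends (fst e)) p u v \<le>
    perc_prob E ends (2 * p - p\<^sup>2) u v"
proof -
  let ?B = "\<lambda>_. bernoulli_pmf p"
  let ?P = "Pi_pmf E False ?B"
  \<comment> \<open>A configuration on the doubled edge set is a pair of independent configurations on E;
    collapsing it takes their pointwise disjunction.\<close>
  define ET where "ET = E \<times> {True}"
  define EF where "EF = E \<times> {False}"
  define merge :: "('a \<times> bool \<Rightarrow> bool) \<times> ('a \<times> bool \<Rightarrow> bool) \<Rightarrow> 'a \<times> bool \<Rightarrow> bool"
    where "merge = (\<lambda>(\<omega>, \<omega>') e. if e \<in> ET then \<omega> e else \<omega>' e)"
  define split :: "('a \<times> bool \<Rightarrow> bool) \<times> ('a \<times> bool \<Rightarrow> bool) \<Rightarrow> ('a \<Rightarrow> bool) \<times> ('a \<Rightarrow> bool)"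
    where "split = (\<lambda>(\<omega>, \<omega>'). (\<omega> \<circ> (\<lambda>e. (e, True)), \<omega>' \<circ> (\<lambda>e. (e, False))))"
  define OR :: "('a \<Rightarrow> bool) \<times> ('a \<Rightarrow> bool) \<Rightarrow> 'a \<Rightarrow> bool"
    where "OR = (\<lambda>(\<omega>, \<omega>') e. e \<in> E \<and> (\<omega> e \<or> \<omega>' e))"
  define collapse where "collapse \<omega> e = (e \<in> E \<and> (\<omega> (e, True) \<or> \<omega> (e, False)))"
    for \<omega> :: "'a \<times> bool \<Rightarrow> bool" and e
  have finite_halves: "finite ET" "finite EF"
    using fin by (auto simp: ET_def EF_def)
  have halves: "E \<times> (UNIV :: bool set) = ET \<union> EF"
    by (auto simp: ET_def EF_def)
  have U: "Pi_pmf (E \<times> UNIV) False ?B = map_pmf merge (pair_pmf (Pi_pmf ET False ?B) (Pi_pmf EF False ?B))"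
    unfolding halves merge_def
    by (rule Pi_pmf_union) (use finite_halves in \<open>auto simp: ET_def EF_def\<close>)
  have BT: "?P = map_pmf (\<lambda>\<omega>. \<omega> \<circ> (\<lambda>e. (e, True))) (Pi_pmf ET False ?B)"
    by (rule Pi_pmf_bij_betw[OF fin]) (auto simp: ET_def bij_betw_def inj_on_def)
  have BF: "?P = map_pmf (\<lambda>\<omega>. \<omega> \<circ> (\<lambda>e. (e, False))) (Pi_pmf EF False ?B)"
    by (rule Pi_pmf_bij_betw[OF fin]) (auto simp: EF_def bij_betw_def inj_on_def)
  have "map_pmf collapse (Pi_pmf (E \<times> UNIV) False ?B) =
      map_pmf (collapse \<circ> merge) (pair_pmf (Pi_pmf ET False ?B) (Pi_pmf EF False ?B))"
    unfolding U by (simp add: map_pmf_comp comp_def)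
  also have "collapse \<circ> merge = OR \<circ> split"
    by (auto simp: collapse_def merge_def OR_def split_def ET_def fun_eq_iff)
  also have "map_pmf (OR \<circ> split) (pair_pmf (Pi_pmf ET False ?B) (Pi_pmf EF False ?B)) =
      map_pmf OR (map_pmf split (pair_pmf (Pi_pmf ET False ?B) (Pi_pmf EF False ?B)))"
    by (simp add: map_pmf_comp comp_def)
  also have "\<dots> = map_pmf OR (pair_pmf ?P ?P)"
    unfolding split_def by (subst map_pair) (simp add: BT[symmetric] BF[symmetric])
  also have "\<dots> = Pi_pmf E False (\<lambda>_. bernoulli_pmf (2 * p - p\<^sup>2))"
    unfolding OR_def by (rule Pi_pmf_bernoulli_or[OF fin p])
  finally have collapsed: "map_pmf collapse (Pi_pmf (E \<times> UNIV) False ?B) = \<dots>" .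
  have collapse_connected: "open_connected E ends (collapse \<omega>) u v"
    if "open_connected (E \<times> UNIV) (\<lambda>e. ends (fst e)) \<omega> u v" for \<omega>
  proof (rule open_connected_mono[OF _ that])
    fix e assume "e \<in> E \<times> UNIV" "\<omega> e"
    then show "\<exists>e'\<in>E. collapse \<omega> e' \<and> ends e' = ends (fst e)"
      by (cases e) (auto simp: collapse_def intro!: bexI[of _ "fst e"]; metis (full_types))
  qed
  have "perc_prob (E \<times> (UNIV :: bool set)) (\<lambda>e. ends (fst e)) p u v \<le>
      measure_pmf.prob (Pi_pmf (E \<times> UNIV) False ?B) (collapse -` {\<omega>. open_connected E ends \<omega> u v})"
    unfolding perc_prob_def
    by (rule measure_pmf.finite_measure_mono) (use collapse_connected in auto)
  also have "\<dots> = perc_prob E ends (2 * p - p\<^sup>2) u v"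
    unfolding perc_prob_def collapsed[symmetric] by simp
  finally show ?thesis .
qed

section \<open>Critical probabilities\<close>

definition subcritical :: "(nat \<Rightarrow> 'e set) \<Rightarrow> ('e \<Rightarrow> complex set) \<Rightarrow> real set" where
  "subcritical G ends = {p \<in> {0..1}. (\<lambda>n. perc_prob (G n) ends p bv0 bv1) \<longlonglongrightarrow> 0}"

lemma crit_prob_eq_Sup_subcritical: "crit_prob G ends = Sup (subcritical G ends)"
  by (simp add: crit_prob_def subcritical_def)

lemma zero_in_subcritical: "(\<And>n. finite (G n)) \<Longrightarrow> 0 \<in> subcritical G ends"
  by (simp add: subcritical_def perc_prob_zero bv0_def bv1_def)

lemma bdd_above_subcritical: "bdd_above (subcritical G ends)"
  by (rule bdd_aboveI[of _ 1]) (simp add: subcritical_def)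

lemma subcritical_if_dominated:
  assumes "q \<in> subcritical H ends'" "0 \<le> p" "p \<le> q"
    and "\<And>n. perc_prob (G n) ends p bv0 bv1 \<le> perc_prob (H n) ends' q bv0 bv1"
  shows "p \<in> subcritical G ends"
proof -
  have "(\<lambda>n. perc_prob (H n) ends' q bv0 bv1) \<longlonglongrightarrow> 0"
    using assms(1) by (simp add: subcritical_def)
  with tendsto_const have "(\<lambda>n. perc_prob (G n) ends p bv0 bv1) \<longlonglongrightarrow> 0"
    by (rule tendsto_sandwich[rotated 2]) (simp_all add: perc_prob_nonneg assms(4))
  then show ?thesis
    using assms(1-3) by (simp add: subcritical_def)
qed

lemma crit_prob_mono:
  assumes "\<And>n. finite (G n)"
    and "\<And>n p. 0 \<le> p \<Longrightarrow> p \<le> 1 \<Longrightarrow>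
      perc_prob (H n) ends' p bv0 bv1 \<le> perc_prob (G n) ends p bv0 bv1"
  shows "crit_prob G ends \<le> crit_prob H ends'"
  unfolding crit_prob_eq_Sup_subcritical
proof (rule cSup_subset_mono)
  show "subcritical G ends \<noteq> {}"
    using zero_in_subcritical[of G, OF assms(1)] by blast
  show "subcritical G ends \<subseteq> subcritical H ends'"
  proof
    fix p assume p: "p \<in> subcritical G ends"
    then have "0 \<le> p" "p \<le> 1"
      by (simp_all add: subcritical_def)
    then show "p \<in> subcritical H ends'"
      using subcritical_if_dominated[OF p _ order_refl assms(2)] by simp
  qed
qed (rule bdd_above_subcritical)

lemma crit_prob_half_le:
  assumes "\<And>n. finite (H n)"
    and "\<And>n p. 0 \<le> p \<Longrightarrow> 2 * p \<le> 1 \<Longrightarrow>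
      perc_prob (G n) ends p bv0 bv1 \<le> perc_prob (H n) ends' (2 * p) bv0 bv1"
  shows "crit_prob H ends' / 2 \<le> crit_prob G ends"
proof -
  have "q \<le> 2 * crit_prob G ends" if q: "q \<in> subcritical H ends'" for q
  proof -
    have "0 \<le> q" "q \<le> 1"
      using q by (simp_all add: subcritical_def)
    then have dominated: "perc_prob (G n) ends (q / 2) bv0 bv1 \<le> perc_prob (H n) ends' q bv0 bv1" for n
      using assms(2)[of "q / 2" n] by simp
    have "q / 2 \<in> subcritical G ends"
      using subcritical_if_dominated[OF q _ _ dominated] \<open>0 \<le> q\<close> by simp
    then have "q / 2 \<le> crit_prob G ends"
      unfolding crit_prob_eq_Sup_subcritical by (rule cSup_upper[OF _ bdd_above_subcritical])
    then show ?thesis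
      by simp
  qed
  moreover have "subcritical H ends' \<noteq> {}"
    using zero_in_subcritical[of H, OF assms(1)] by blast
  ultimately have "Sup (subcritical H ends') \<le> 2 * crit_prob G ends"
    by (simp add: cSup_least)
  then show ?thesis
    unfolding crit_prob_eq_Sup_subcritical[of H] by linarith
qed

section \<open>Triangles in the plane\<close>

definition cross :: "complex \<Rightarrow> complex \<Rightarrow> real" where
  "cross a b = Re a * Im b - Im a * Re b"

definition signed_area2 :: "face \<Rightarrow> real" where
  "signed_area2 f = (case f of (x, y, z) \<Rightarrow> cross (y - x) (z - x))"

definition open_triangle :: "face \<Rightarrow> complex set" where
  "open_triangle f = (case f of (x, y, z) \<Rightarrow>
     {of_real a * x + of_real b * y + of_real c * z | a b c. 0 < a \<and> 0 < b \<and> 0 < c \<and> a + b + c = 1})"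

lemma mem_open_triangle_iff:
  "p \<in> open_triangle (x, y, z) \<longleftrightarrow>
   (\<exists>a b c. 0 < a \<and> 0 < b \<and> 0 < c \<and> a + b + c = 1 \<and> p = of_real a * x + of_real b * y + of_real c * z)"
  unfolding open_triangle_def by blast

lemma open_triangle_rotate_subset: "open_triangle (x, y, z) \<subseteq> open_triangle (y, z, x)"
proof
  fix p assume "p \<in> open_triangle (x, y, z)"
  then obtain a b c where "0 < a" "0 < b" "0 < c" "a + b + c = 1"
    and "p = of_real a * x + of_real b * y + of_real c * z"
    unfolding mem_open_triangle_iff by blast
  then show "p \<in> open_triangle (y, z, x)"
    unfolding mem_open_triangle_iff by (intro exI[of _ b] exI[of _ c] exI[of _ a]) (simp add: algebra_simps)
qed

lemma open_triangle_swap_subset: "open_triangle (x, y, z) \<subseteq> open_triangle (y, x, z)"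
proof
  fix p assume "p \<in> open_triangle (x, y, z)"
  then obtain a b c where "0 < a" "0 < b" "0 < c" "a + b + c = 1"
    and "p = of_real a * x + of_real b * y + of_real c * z"
    unfolding mem_open_triangle_iff by blast
  then show "p \<in> open_triangle (y, x, z)"
    unfolding mem_open_triangle_iff by (intro exI[of _ b] exI[of _ a] exI[of _ c]) (simp add: algebra_simps)
qed

lemma open_triangle_rotate: "open_triangle (x, y, z) = open_triangle (y, z, x)"
  using open_triangle_rotate_subset[of x y z] open_triangle_rotate_subset[of y z x]
    open_triangle_rotate_subset[of z x y] by blast

lemma open_triangle_swap: "open_triangle (x, y, z) = open_triangle (y, x, z)"
  using open_triangle_swap_subset[of x y z] open_triangle_swap_subset[of y x z] by blast

lemma signed_area2_rotate: "signed_area2 (x, y, z) = signed_area2 (y, z, x)"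
  by (simp add: signed_area2_def cross_def algebra_simps)

lemma signed_area2_swap: "signed_area2 (x, y, z) = - signed_area2 (y, x, z)"
  by (simp add: signed_area2_def cross_def algebra_simps)

lemma signed_area2_nonzero_distinct:
  "signed_area2 (x, y, z) \<noteq> 0 \<Longrightarrow> x \<noteq> y \<and> y \<noteq> z \<and> z \<noteq> x"
  by (auto simp: signed_area2_def cross_def)

text \<open>Cramer's rule: barycentric coordinates are ratios of signed areas.\<close>
lemma barycentric_cramer:
  "of_real (signed_area2 (a, b, c)) * w =
     of_real (signed_area2 (w, b, c)) * a + of_real (signed_area2 (a, w, c)) * b +
     of_real (signed_area2 (a, b, w)) * c"
  by (rule complex_eqI) (simp_all add: signed_area2_def cross_def algebra_simps)

lemma signed_area2_split:
  "signed_area2 (w, b, c) + signed_area2 (a, w, c) + signed_area2 (a, b, w) = signed_area2 (a, b, c)"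
  by (simp add: signed_area2_def cross_def algebra_simps)

lemma barycentric_coords_unique:
  assumes nondeg: "signed_area2 (x, y, z) \<noteq> 0" and sum: "a + b + c = a' + b' + c'"
    and eq: "of_real a * x + of_real b * y + of_real c * z = of_real a' * x + of_real b' * y + of_real c' * z"
  shows "a = a' \<and> b = b' \<and> c = c'"
proof -
  define \<beta> where "\<beta> = b - b'"
  define \<gamma> where "\<gamma> = c - c'"
  have "a - a' = - \<beta> - \<gamma>"
    using sum by (simp add: \<beta>_def \<gamma>_def)
  moreover have "of_real (a - a') * x + of_real \<beta> * y + of_real \<gamma> * z = 0"
    using eq by (simp add: \<beta>_def \<gamma>_def algebra_simps)
  ultimately have "of_real (- \<beta> - \<gamma>) * x + of_real \<beta> * y + of_real \<gamma> * z = 0"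
    by (simp only:)
  then have comb: "of_real \<beta> * (y - x) + of_real \<gamma> * (z - x) = 0"
    by (simp add: algebra_simps)
  have re: "\<beta> * Re (y - x) + \<gamma> * Re (z - x) = 0" and im: "\<beta> * Im (y - x) + \<gamma> * Im (z - x) = 0"
    using arg_cong[OF comb, of Re] arg_cong[OF comb, of Im] by simp_all
  have "\<beta> * signed_area2 (x, y, z) =
      (\<beta> * Re (y - x) + \<gamma> * Re (z - x)) * Im (z - x) - (\<beta> * Im (y - x) + \<gamma> * Im (z - x)) * Re (z - x)"
    "\<gamma> * signed_area2 (x, y, z) =
      (\<beta> * Im (y - x) + \<gamma> * Im (z - x)) * Re (y - x) - (\<beta> * Re (y - x) + \<gamma> * Re (z - x)) * Im (y - x)"
    by (simp_all add: signed_area2_def cross_def algebra_simps)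
  then have "\<beta> * signed_area2 (x, y, z) = 0" "\<gamma> * signed_area2 (x, y, z) = 0"
    by (simp_all only: re im mult_zero_left diff_self)
  then have "\<beta> = 0" "\<gamma> = 0"
    using nondeg by simp_all
  then show ?thesis
    using sum by (simp add: \<beta>_def \<gamma>_def)
qed

text \<open>Points close enough to the midpoint of uv lie in both triangles.\<close>
lemma open_triangles_meet_near_edge:
  assumes coords: "w = of_real \<alpha> * u + of_real \<beta> * v + of_real r * w'"
    and sum: "\<alpha> + \<beta> + r = 1" and "0 < r"
  shows "open_triangle (u, v, w) \<inter> open_triangle (u, v, w') \<noteq> {}"
proof -
  define t where "t = 1 / (2 * (1 + \<bar>\<alpha>\<bar> + \<bar>\<beta>\<bar>))"
  have "0 < 1 + \<bar>\<alpha>\<bar> + \<bar>\<beta>\<bar>"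
    by (simp add: add_pos_nonneg)
  then have "0 < t" "2 * t * (1 + \<bar>\<alpha>\<bar> + \<bar>\<beta>\<bar>) = 1"
    by (simp_all add: t_def)
  then have t_small: "2 * t + 2 * (t * \<bar>\<alpha>\<bar>) + 2 * (t * \<bar>\<beta>\<bar>) = 1"
    by (simp add: algebra_simps)
  have "\<bar>t * \<alpha>\<bar> = t * \<bar>\<alpha>\<bar>" "\<bar>t * \<beta>\<bar> = t * \<bar>\<beta>\<bar>"
    using \<open>0 < t\<close> by (simp_all add: abs_mult)
  note bounds = this t_small \<open>0 < t\<close> abs_ge_minus_self[of "t * \<alpha>"] abs_ge_minus_self[of "t * \<beta>"]
    abs_ge_zero[of "t * \<alpha>"] abs_ge_zero[of "t * \<beta>"]
  have pos_\<alpha>: "0 < (1 - t) / 2 + t * \<alpha>" and pos_\<beta>: "0 < (1 - t) / 2 + t * \<beta>"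
    using bounds by (simp_all add: field_simps)
  have "t < 1"
    using bounds by linarith
  define p where "p = of_real ((1 - t) / 2) * u + of_real ((1 - t) / 2) * v + of_real t * w"
  have "p \<in> open_triangle (u, v, w)"
    unfolding mem_open_triangle_iff p_def
    by (rule exI[of _ "(1 - t) / 2"], rule exI[of _ "(1 - t) / 2"], rule exI[of _ t])
      (use \<open>0 < t\<close> \<open>t < 1\<close> in auto)
  moreover have "p \<in> open_triangle (u, v, w')"
  proof -
    have "p = of_real ((1 - t) / 2 + t * \<alpha>) * u + of_real ((1 - t) / 2 + t * \<beta>) * v + of_real (t * r) * w'"
      unfolding p_def coords by (simp add: algebra_simps)
    moreover have "t * \<alpha> + t * \<beta> + t * r = t"
      using sum by (simp add: distrib_left[symmetric])
    ultimately show ?thesis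
      using pos_\<alpha> pos_\<beta> \<open>0 < t\<close> \<open>0 < r\<close> unfolding mem_open_triangle_iff
      by (intro exI[of _ "(1 - t) / 2 + t * \<alpha>"] exI[of _ "(1 - t) / 2 + t * \<beta>"] exI[of _ "t * r"]) auto
  qed
  ultimately show ?thesis
    by blast
qed

lemma open_triangles_same_side_meet:
  assumes same_side: "0 < signed_area2 (u, v, w) * signed_area2 (u, v, w')"
  shows "open_triangle (u, v, w) \<inter> open_triangle (u, v, w') \<noteq> {}"
proof (rule open_triangles_meet_near_edge)
  define D where "D = signed_area2 (u, v, w')"
  have "D \<noteq> 0"
    using same_side by (auto simp: D_def)
  show "w = of_real (signed_area2 (w, v, w') / D) * u + of_real (signed_area2 (u, w, w') / D) * v +
      of_real (signed_area2 (u, v, w) / D) * w'"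
    using barycentric_cramer[of u v w' w] \<open>D \<noteq> 0\<close> by (simp add: D_def field_simps)
  show "signed_area2 (w, v, w') / D + signed_area2 (u, w, w') / D + signed_area2 (u, v, w) / D = 1"
    using signed_area2_split[of w v w' u] \<open>D \<noteq> 0\<close> by (simp add: D_def field_simps)
  show "0 < signed_area2 (u, v, w) / D"
    using same_side by (simp add: D_def zero_less_divide_iff zero_less_mult_iff)
qed

lemma side_as_first_edge:
  assumes "i < 3"
  obtains a b c where "open_triangle f = open_triangle (a, b, c)"
    "signed_area2 (a, b, c) = signed_area2 f" "side f i = {a, b}"
proof -
  obtain x y z where f: "f = (x, y, z)"
    by (cases f)
  have "i = 0 \<or> i = 1 \<or> i = 2"
    using assms by auto
  then show thesis
  proof (elim disjE)
    assume "i = 0"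
    then show thesis
      by (intro that[of x y z]) (simp_all add: f side_def)
  next
    assume "i = 1"
    then show thesis
      using open_triangle_rotate[of x y z] signed_area2_rotate[of x y z]
      by (intro that[of y z x]) (simp_all add: f side_def)
  next
    assume "i = 2"
    then show thesis
      using open_triangle_rotate[of x y z] open_triangle_rotate[of y z x]
        signed_area2_rotate[of x y z] signed_area2_rotate[of y z x]
      by (intro that[of z x y]) (simp_all add: f side_def)
  qed
qed

lemma open_triangle_of_side:
  assumes "signed_area2 f \<noteq> 0" "i < 3" "side f i = {u, v}"
  obtains w where "open_triangle f = open_triangle (u, v, w)" "signed_area2 (u, v, w) \<noteq> 0"
proof -
  obtain a b c where abc: "open_triangle f = open_triangle (a, b, c)"
    "signed_area2 (a, b, c) = signed_area2 f" "side f i = {a, b}"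
    using side_as_first_edge[OF assms(2)] by metis
  then have "(u = a \<and> v = b) \<or> (u = b \<and> v = a)"
    using assms(3) by (auto simp: doubleton_eq_iff)
  then show thesis
  proof
    assume "u = a \<and> v = b"
    then show thesis
      using abc assms(1) by (intro that[of c]) simp_all
  next
    assume "u = b \<and> v = a"
    then show thesis
      using abc assms(1) open_triangle_swap[of a b c] signed_area2_swap[of a b c]
      by (intro that[of c]) simp_all
  qed
qed

lemma side_doubleton: "\<exists>u v. side f i = {u, v}"
  by (cases f) (auto simp: side_def)

lemma side_inj:
  assumes "signed_area2 f \<noteq> 0" "i < 3" "j < 3" "side f i = side f j"
  shows "i = j"
proof -
  obtain x y z where f: "f = (x, y, z)"
    by (cases f)
  then have "x \<noteq> y" "y \<noteq> z" "z \<noteq> x"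
    using signed_area2_nonzero_distinct assms(1) by auto
  moreover have "i = 0 \<or> i = 1 \<or> i = 2" "j = 0 \<or> j = 1 \<or> j = 2"
    using assms(2,3) by auto
  ultimately show ?thesis
    using assms(4) unfolding f side_def by (auto simp: doubleton_eq_iff)
qed

section \<open>Barycentric subdivision\<close>

definition child :: "face \<Rightarrow> nat \<Rightarrow> face" where
  "child f i = (case f of (x, y, z) \<Rightarrow> (let c = (x + y + z) / 3 in
     if i = 0 then (x, mid x y, c) else if i = 1 then (mid x y, y, c)
     else if i = 2 then (y, mid y z, c) else if i = 3 then (mid y z, z, c)
     else if i = 4 then (z, mid z x, c) else (mid z x, x, c)))"

lemma subdivide_eq_child_image: "subdivide f = child f ` {..<6}"
proof -
  have "{..<6::nat} = {0, 1, 2, 3, 4, 5}"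
    by auto
  then show ?thesis
    by (cases f) (simp add: subdivide_def child_def Let_def insert_commute)
qed

lemma signed_area2_child: "signed_area2 (child f i) = signed_area2 f / 6"
  by (cases f) (simp add: child_def signed_area2_def cross_def mid_def Let_def field_simps)

text \<open>The six children of a face are told apart by the order of the barycentric coordinates
  (with respect to the parent) of their interior points.\<close>
definition coord_order :: "nat \<Rightarrow> real \<Rightarrow> real \<Rightarrow> real \<Rightarrow> bool" where
  "coord_order i a b c = (if i = 0 then a > b \<and> b > c else if i = 1 then b > a \<and> a > c
     else if i = 2 then b > c \<and> c > a else if i = 3 then c > b \<and> b > a
     else if i = 4 then c > a \<and> a > b else a > c \<and> c > b)"

lemma coord_order_unique: "i < 6 \<Longrightarrow> j < 6 \<Longrightarrow> coord_order i a b c \<Longrightarrow> coord_order j a b c \<Longrightarrow> i = j"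
  unfolding coord_order_def by (auto split: if_splits)

lemma corner_child_coords:
  assumes "p \<in> open_triangle (v, mid v w, c)" "c = (u + v + w) / 3"
  obtains a b d where "0 < a" "0 < b" "0 < d" "a + b + d = 1"
    "p = of_real a * v + of_real b * w + of_real d * u" "b < a" "d < b"
proof -
  obtain a b d where "0 < a" "0 < b" "0 < d" "a + b + d = 1"
    and "p = of_real a * v + of_real b * mid v w + of_real d * c"
    using assms(1) unfolding mem_open_triangle_iff by blast
  then show thesis
    using assms(2) by (intro that[of "a + b / 2 + d / 3" "b / 2 + d / 3" "d / 3"])
      (auto simp: mid_def algebra_simps add_divide_distrib)
qed

lemma edge_child_coords:
  assumes "p \<in> open_triangle (mid v w, w, c)" "c = (u + v + w) / 3"
  obtains a b d where "0 < a" "0 < b" "0 < d" "a + b + d = 1"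
    "p = of_real a * v + of_real b * w + of_real d * u" "a < b" "d < a"
proof -
  obtain a b d where "0 < a" "0 < b" "0 < d" "a + b + d = 1"
    and "p = of_real a * mid v w + of_real b * w + of_real d * c"
    using assms(1) unfolding mem_open_triangle_iff by blast
  then show thesis
    using assms(2) by (intro that[of "a / 2 + d / 3" "a / 2 + b + d / 3" "d / 3"])
      (auto simp: mid_def algebra_simps add_divide_distrib)
qed

lemma child_rotate: "i < 4 \<Longrightarrow> child (x, y, z) (i + 2) = child (y, z, x) i"
  by (auto simp: child_def Let_def add_ac)

lemma coord_order_rotate: "i < 4 \<Longrightarrow> coord_order (i + 2) a b c = coord_order i b c a"
  by (auto simp: coord_order_def)

lemma child_coords:
  assumes "i < 6" "p \<in> open_triangle (child (x, y, z) i)"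
  shows "\<exists>a b c. 0 < a \<and> 0 < b \<and> 0 < c \<and> a + b + c = 1 \<and>
    p = of_real a * x + of_real b * y + of_real c * z \<and> coord_order i a b c"
  using assms
proof (induction i arbitrary: x y z rule: less_induct)
  case (less i)
  have centroid: "(x + y + z) / 3 = (z + x + y) / 3"
    by (simp add: add_ac)
  consider "i = 0" | "i = 1" | "2 \<le> i"
    by linarith
  then show ?case
  proof cases
    case 1
    then have "p \<in> open_triangle (x, mid x y, (x + y + z) / 3)"
      using less.prems by (simp add: child_def Let_def)
    then obtain a b d where "0 < a" "0 < b" "0 < d" "a + b + d = 1"
      "p = of_real a * x + of_real b * y + of_real d * z" "b < a" "d < b"
      by (rule corner_child_coords[OF _ centroid])
    then show ?thesis
      using \<open>i = 0\<close> by (rule_tac exI[of _ a], rule_tac exI[of _ b], rule_tac exI[of _ d])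
        (simp add: coord_order_def)
  next
    case 2
    then have "p \<in> open_triangle (mid x y, y, (x + y + z) / 3)"
      using less.prems by (simp add: child_def Let_def)
    then obtain a b d where "0 < a" "0 < b" "0 < d" "a + b + d = 1"
      "p = of_real a * x + of_real b * y + of_real d * z" "a < b" "d < a"
      by (rule edge_child_coords[OF _ centroid])
    then show ?thesis
      using \<open>i = 1\<close> by (rule_tac exI[of _ a], rule_tac exI[of _ b], rule_tac exI[of _ d])
        (simp add: coord_order_def)
  next
    case 3
    define j where "j = i - 2"
    have "i = j + 2" "j < 4" "j < i"
      using 3 less.prems(1) by (simp_all add: j_def)
    then have "p \<in> open_triangle (child (y, z, x) j)"
      using less.prems(2) child_rotate[of j x y z] by simp
    then obtain a b c where "0 < a" "0 < b" "0 < c" "a + b + c = 1"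
      "p = of_real a * y + of_real b * z + of_real c * x" "coord_order j a b c"
      using less.IH[of j y z x] \<open>j < i\<close> \<open>j < 4\<close> by auto
    then show ?thesis
      using \<open>i = j + 2\<close> \<open>j < 4\<close> coord_order_rotate[of j c a b]
      by (rule_tac exI[of _ c], rule_tac exI[of _ a], rule_tac exI[of _ b]) (auto simp: algebra_simps)
  qed
qed

lemma open_triangle_child_subset:
  "i < 6 \<Longrightarrow> open_triangle (child (x, y, z) i) \<subseteq> open_triangle (x, y, z)"
  by (auto simp: mem_open_triangle_iff dest!: child_coords; blast)

lemma open_triangle_children_disjoint:
  assumes "signed_area2 (x, y, z) \<noteq> 0" "i < 6" "j < 6" "child (x, y, z) i \<noteq> child (x, y, z) j"
  shows "open_triangle (child (x, y, z) i) \<inter> open_triangle (child (x, y, z) j) = {}"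
proof (rule ccontr)
  assume "open_triangle (child (x, y, z) i) \<inter> open_triangle (child (x, y, z) j) \<noteq> {}"
  then obtain p where pi: "p \<in> open_triangle (child (x, y, z) i)"
    and pj: "p \<in> open_triangle (child (x, y, z) j)"
    by blast
  obtain a b c where abc: "a + b + c = 1" "p = of_real a * x + of_real b * y + of_real c * z"
    "coord_order i a b c"
    using child_coords[OF assms(2) pi] by blast
  obtain a' b' c' where abc': "a' + b' + c' = 1" "p = of_real a' * x + of_real b' * y + of_real c' * z"
    "coord_order j a' b' c'"
    using child_coords[OF assms(3) pj] by blast
  have "a = a' \<and> b = b' \<and> c = c'"
    using abc(1,2) abc'(1,2) by (intro barycentric_coords_unique[OF assms(1)]) simp_all
  then have "i = j"
    using coord_order_unique[OF assms(2,3)] abc(3) abc'(3) by simp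
  then show False
    using assms(4) by simp
qed

lemma signed_area2_bary_faces_pos: "f \<in> bary_faces n \<Longrightarrow> 0 < signed_area2 f"
proof (induction n arbitrary: f)
  case 0
  then show ?case
    by (simp add: signed_area2_def cross_def bv0_def bv1_def bv2_def)
next
  case (Suc n)
  then show ?case
    by (auto simp: subdivide_eq_child_image signed_area2_child)
qed

lemma bary_faces_disjoint:
  "f \<in> bary_faces n \<Longrightarrow> g \<in> bary_faces n \<Longrightarrow> f \<noteq> g \<Longrightarrow> open_triangle f \<inter> open_triangle g = {}"
proof (induction n arbitrary: f g)
  case (Suc n)
  obtain F i where F: "F \<in> bary_faces n" "i < 6" "f = child F i"
    using Suc.prems(1) by (auto simp: subdivide_eq_child_image)
  obtain G j where G: "G \<in> bary_faces n" "j < 6" "g = child G j"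
    using Suc.prems(2) by (auto simp: subdivide_eq_child_image)
  show ?case
  proof (cases "F = G")
    case True
    obtain x y z where "F = (x, y, z)"
      by (cases F)
    moreover have "signed_area2 F \<noteq> 0"
      using signed_area2_bary_faces_pos[OF F(1)] by simp
    ultimately show ?thesis
      using open_triangle_children_disjoint[of x y z i j] F G Suc.prems(3) True by simp
  next
    case False
    then have "open_triangle F \<inter> open_triangle G = {}"
      using Suc.IH F(1) G(1) by blast
    moreover have "open_triangle f \<subseteq> open_triangle F" "open_triangle g \<subseteq> open_triangle G"
      using open_triangle_child_subset F(2,3) G(2,3) by (cases F, cases G, simp)+
    ultimately show ?thesis
      by blast
  qed
qed simp

lemma finite_bary_faces: "finite (bary_faces n)"
  by (induction n) (auto simp: subdivide_eq_child_image)

section \<open>Comparing T_n with S~_n\<close>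

lemma finite_S_edges: "finite (S_edges n)"
  by (simp add: S_edges_def finite_bary_faces)

lemma finite_T_edges: "finite (T_edges n)"
proof -
  have "T_edges n = (\<lambda>(f, i). side f i) ` (bary_faces n \<times> {..<3})"
    unfolding T_edges_def by auto
  then show ?thesis
    by (simp add: finite_bary_faces)
qed

lemma S_ends_in_T_edges: "e \<in> S_edges n \<Longrightarrow> S_ends e \<in> T_edges n"
proof -
  assume "e \<in> S_edges n"
  then have "fst e \<in> bary_faces n" "snd e < 3"
    by (auto simp: S_edges_def)
  then show ?thesis
    unfolding S_ends_def T_edges_def by blast
qed

lemma T_edge_has_S_copy:
  assumes "s \<in> T_edges n"
  shows "\<exists>e\<in>S_edges n. S_ends e = s"
proof -
  obtain f i where "s = side f i" "f \<in> bary_faces n" "i < 3"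
    using assms unfolding T_edges_def by blast
  then show ?thesis
    by (intro bexI[of _ "(f, i)"]) (auto simp: S_edges_def S_ends_def)
qed

lemma S_edge_open_triangle:
  assumes "e \<in> S_edges n" "S_ends e = {u, v}"
  obtains w where "open_triangle (fst e) = open_triangle (u, v, w)" "signed_area2 (u, v, w) \<noteq> 0"
proof (rule open_triangle_of_side)
  show "signed_area2 (fst e) \<noteq> 0"
    using assms(1) signed_area2_bary_faces_pos by (fastforce simp: S_edges_def)
  show "snd e < 3" "side (fst e) (snd e) = {u, v}"
    using assms by (auto simp: S_edges_def S_ends_def)
qed

text \<open>Faces sharing a side lie on opposite sides of it because their interiors are disjoint.\<close>
lemma S_edges_opposite_sides:
  assumes "e \<in> S_edges n" "e' \<in> S_edges n" "e \<noteq> e'" "S_ends e = {u, v}" "S_ends e' = {u, v}"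
    and "open_triangle (fst e) = open_triangle (u, v, w)" "open_triangle (fst e') = open_triangle (u, v, w')"
  shows "signed_area2 (u, v, w) * signed_area2 (u, v, w') \<le> 0"
proof -
  have "fst e \<noteq> fst e'"
  proof
    assume same_face: "fst e = fst e'"
    have "signed_area2 (fst e) \<noteq> 0"
      using assms(1) signed_area2_bary_faces_pos by (fastforce simp: S_edges_def)
    moreover have "snd e < 3" "snd e' < 3" "side (fst e) (snd e) = side (fst e) (snd e')"
      using assms(1,2,4,5) same_face by (auto simp: S_edges_def S_ends_def)
    ultimately have "snd e = snd e'"
      by (rule side_inj)
    then show False
      using assms(3) same_face by (simp add: prod_eq_iff)
  qed
  then have "open_triangle (fst e) \<inter> open_triangle (fst e') = {}"
    using assms(1,2) by (intro bary_faces_disjoint) (auto simp: S_edges_def)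
  then show ?thesis
    using open_triangles_same_side_meet[of u v w w'] assms(6,7) by fastforce
qed

lemma same_sign_of_opposite_signs:
  fixes a b c :: real
  assumes "a \<noteq> 0" "b \<noteq> 0" "c \<noteq> 0" "a * b \<le> 0" "a * c \<le> 0"
  shows "0 < b * c"
proof -
  have "0 < (a * b * c)\<^sup>2"
    using assms(1-3) by simp
  also have "(a * b * c)\<^sup>2 = ((a * b) * (a * c)) * (b * c)"
    by (simp add: power2_eq_square algebra_simps)
  finally have "0 < ((a * b) * (a * c)) * (b * c)" .
  moreover have "0 \<le> (a * b) * (a * c)"
    using assms(4,5) by (rule mult_nonpos_nonpos)
  ultimately show ?thesis
    by (auto simp: zero_less_mult_iff)
qed

lemma S_edges_at_most_two_copies:
  assumes "e1 \<in> S_edges n" "e2 \<in> S_edges n" "e3 \<in> S_edges n"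
    and "S_ends e2 = S_ends e1" "S_ends e3 = S_ends e1"
  shows "e1 = e2 \<or> e1 = e3 \<or> e2 = e3"
proof (rule ccontr)
  assume "\<not> (e1 = e2 \<or> e1 = e3 \<or> e2 = e3)"
  then have "e1 \<noteq> e2" "e1 \<noteq> e3" "e2 \<noteq> e3"
    by simp_all
  obtain u v where e1: "S_ends e1 = {u, v}"
    using side_doubleton unfolding S_ends_def by blast
  then have e2: "S_ends e2 = {u, v}" and e3: "S_ends e3 = {u, v}"
    using assms(4,5) by simp_all
  obtain w1 where w1: "open_triangle (fst e1) = open_triangle (u, v, w1)" "signed_area2 (u, v, w1) \<noteq> 0"
    using S_edge_open_triangle[OF assms(1) e1] by blast
  obtain w2 where w2: "open_triangle (fst e2) = open_triangle (u, v, w2)" "signed_area2 (u, v, w2) \<noteq> 0"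
    using S_edge_open_triangle[OF assms(2) e2] by blast
  obtain w3 where w3: "open_triangle (fst e3) = open_triangle (u, v, w3)" "signed_area2 (u, v, w3) \<noteq> 0"
    using S_edge_open_triangle[OF assms(3) e3] by blast
  have "signed_area2 (u, v, w1) * signed_area2 (u, v, w2) \<le> 0"
    using S_edges_opposite_sides[OF assms(1,2) \<open>e1 \<noteq> e2\<close> e1 e2 w1(1) w2(1)] .
  moreover have "signed_area2 (u, v, w1) * signed_area2 (u, v, w3) \<le> 0"
    using S_edges_opposite_sides[OF assms(1,3) \<open>e1 \<noteq> e3\<close> e1 e3 w1(1) w3(1)] .
  moreover have "signed_area2 (u, v, w2) * signed_area2 (u, v, w3) \<le> 0"
    using S_edges_opposite_sides[OF assms(2,3) \<open>e2 \<noteq> e3\<close> e2 e3 w2(1) w3(1)] .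
  ultimately show False
    using same_sign_of_opposite_signs[OF w1(2) w2(2) w3(2)] by simp
qed

lemma infinite_UNIV_S_edge: "infinite (UNIV :: (face \<times> nat) set)"
  by (simp add: finite_prod)

lemma infinite_UNIV_doubled_T_edge: "infinite (UNIV :: (complex set \<times> bool) set)"
  by (simp add: finite_prod Finite_Set.finite_set infinite_UNIV_char_0)

lemma perc_prob_T_le_S: "perc_prob (T_edges n) id p u v \<le> perc_prob (S_edges n) S_ends p u v"
proof -
  define copy where "copy s = (SOME e. e \<in> S_edges n \<and> S_ends e = s)" for s
  have copy: "copy s \<in> S_edges n \<and> S_ends (copy s) = s" if "s \<in> T_edges n" for s
    unfolding copy_def using T_edge_has_S_copy[OF that] by (rule someI2_bex) simp
  then have "inj_on copy (T_edges n)"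
    by (metis inj_onI)
  then show ?thesis
    using copy by (intro perc_prob_le_embedding[OF finite_S_edges infinite_UNIV_S_edge]) auto
qed

text \<open>Each side of T_n carries at most two edges of S~_n, so S~_n embeds into T_n with every
  edge doubled: a chosen representative copy goes to the first edge, any other copy to the second.\<close>
lemma perc_prob_S_le_T:
  assumes "0 \<le> p" "p \<le> 1"
  shows "perc_prob (S_edges n) S_ends p u v \<le> perc_prob (T_edges n) id (2 * p - p\<^sup>2) u v"
proof -
  define rep where "rep s = (SOME e. e \<in> S_edges n \<and> S_ends e = s)" for s
  define label where "label e = (S_ends e, e = rep (S_ends e))" for e
  have rep: "rep s \<in> S_edges n \<and> S_ends (rep s) = s" if "s \<in> T_edges n" for s
    unfolding rep_def using T_edge_has_S_copy[OF that] by (rule someI2_bex) simp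
  have inj: "inj_on label (S_edges n)"
  proof (rule inj_onI)
    fix e e' assume e: "e \<in> S_edges n" and e': "e' \<in> S_edges n" and same_label: "label e = label e'"
    have ends: "S_ends e' = S_ends e"
      using arg_cong[OF same_label, of fst] by (simp add: label_def)
    have flag: "(e = rep (S_ends e)) = (e' = rep (S_ends e))"
      using arg_cong[OF same_label, of snd] by (simp add: label_def ends)
    have "rep (S_ends e) \<in> S_edges n" "S_ends (rep (S_ends e)) = S_ends e"
      using rep[OF S_ends_in_T_edges[OF e]] by simp_all
    from S_edges_at_most_two_copies[OF e e' this(1) ends this(2)] flag
    show "e = e'"
      by blast
  qed
  have "label ` S_edges n \<subseteq> T_edges n \<times> UNIV"
    by (auto simp: label_def intro: S_ends_in_T_edges)
  then have "perc_prob (S_edges n) S_ends p u v \<le>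
      perc_prob (T_edges n \<times> (UNIV :: bool set)) (\<lambda>e. id (fst e)) p u v"
    using finite_T_edges by (intro perc_prob_le_embedding[OF _ infinite_UNIV_doubled_T_edge inj])
      (simp_all add: label_def)
  also have "\<dots> \<le> perc_prob (T_edges n) id (2 * p - p\<^sup>2) u v"
    by (rule perc_prob_doubled_le[OF finite_T_edges assms])
  finally show ?thesis .
qed

lemma perc_prob_S_le_T_twice:
  assumes "0 \<le> p" "2 * p \<le> 1"
  shows "perc_prob (S_edges n) S_ends p u v \<le> perc_prob (T_edges n) id (2 * p) u v"
proof -
  have "perc_prob (S_edges n) S_ends p u v \<le> perc_prob (T_edges n) id (2 * p - p\<^sup>2) u v"
    using assms by (intro perc_prob_S_le_T) simp_all
  also have "\<dots> \<le> perc_prob (T_edges n) id (2 * p) u v"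
  proof (rule perc_prob_mono[OF finite_T_edges])
    have "p * p \<le> p"
      using assms by (intro mult_left_le_one_le) simp_all
    then show "0 \<le> 2 * p - p\<^sup>2" "2 * p - p\<^sup>2 \<le> 2 * p" "2 * p \<le> 1"
      using assms by (simp_all add: power2_eq_square)
  qed
  finally show ?thesis .
qed

theorem theorem4p9:
  shows "p_T / 2 \<le> p_S \<and> p_S \<le> p_T"
proof
  show "p_T / 2 \<le> p_S"
    unfolding p_T_def p_S_def by (rule crit_prob_half_le[OF finite_T_edges perc_prob_S_le_T_twice])
  show "p_S \<le> p_T"
    unfolding p_T_def p_S_def by (rule crit_prob_mono[OF finite_S_edges perc_prob_T_le_S])
qed

end
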